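(* Let $G$ be a torsion-free group and $G'\le G$ a subgroup of finite index. Suppose $G$ acts on a simplicial tree $T$ and the induced action of $G'$ on $T$ is $\kappa$-acylindrical. Then the action of $G$ on $T$ is $\kappa$-acylindrical.
   Context: For a non-negative integer $\kappa$, an action of a group on a simplicial tree is $\kappa$-acylindrical if the pointwise stabiliser of every edge path of length at least $\kappa+1$ (number of edges) is trivial. *)

theory Defs
  imports "HOL-Algebra.Group_Action" "HOL-Algebra.Coset"
begin

definition simple_graph :: "'v set \<Rightarrow> ('v \<Rightarrow> 'v \<Rightarrow> bool) \<Rightarrow> bool" where
  "simple_graph V E \<longleftrightarrow>
     (\<forall>x y. E x y \<longrightarrow> x \<in> V \<and> y \<in> V) \<and> (\<forall>x y. E x y \<longrightarrow> E y x) \<and> (\<forall>x. \<not> E x x)"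

definition walk :: "'v set \<Rightarrow> ('v \<Rightarrow> 'v \<Rightarrow> bool) \<Rightarrow> 'v list \<Rightarrow> bool" where
  "walk V E p \<longleftrightarrow> p \<noteq> [] \<and> set p \<subseteq> V \<and> (\<forall>i. Suc i < length p \<longrightarrow> E (p ! i) (p ! Suc i))"

definition simplicial_tree :: "'v set \<Rightarrow> ('v \<Rightarrow> 'v \<Rightarrow> bool) \<Rightarrow> bool" where
  "simplicial_tree V E \<longleftrightarrow> simple_graph V E \<and>
     (\<forall>x\<in>V. \<forall>y\<in>V. \<exists>p. walk V E p \<and> hd p = x \<and> last p = y) \<and>
     \<not> (\<exists>p. walk V E p \<and> distinct p \<and> length p \<ge> 3 \<and> E (last p) (hd p))"

text \<open>An edge path (reduced, i.e. without backtracking; in a tree this means its vertices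
  are pairwise distinct) given by its vertex sequence; its length is the number of edges.\<close>
definition edge_path :: "'v set \<Rightarrow> ('v \<Rightarrow> 'v \<Rightarrow> bool) \<Rightarrow> 'v list \<Rightarrow> bool" where
  "edge_path V E p \<longleftrightarrow> walk V E p \<and> distinct p"

definition tree_action :: "('a, 'b) monoid_scheme \<Rightarrow> 'v set \<Rightarrow> ('v \<Rightarrow> 'v \<Rightarrow> bool) \<Rightarrow> ('a \<Rightarrow> 'v \<Rightarrow> 'v) \<Rightarrow> bool" where
  "tree_action G V E \<phi> \<longleftrightarrow> simplicial_tree V E \<and> group_action G V \<phi> \<and>
     (\<forall>g\<in>carrier G. \<forall>x\<in>V. \<forall>y\<in>V. E (\<phi> g x) (\<phi> g y) \<longleftrightarrow> E x y)"

text \<open>Pointwise stabiliser of a path (fixing all its vertices, hence all its edges).\<close>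
definition pointwise_stab :: "('a, 'b) monoid_scheme \<Rightarrow> ('a \<Rightarrow> 'v \<Rightarrow> 'v) \<Rightarrow> 'v list \<Rightarrow> 'a set" where
  "pointwise_stab G \<phi> p = {g \<in> carrier G. \<forall>v\<in>set p. \<phi> g v = v}"

definition acylindrical :: "nat \<Rightarrow> ('a, 'b) monoid_scheme \<Rightarrow> 'v set \<Rightarrow> ('v \<Rightarrow> 'v \<Rightarrow> bool) \<Rightarrow> ('a \<Rightarrow> 'v \<Rightarrow> 'v) \<Rightarrow> bool" where
  "acylindrical \<kappa> G V E \<phi> \<longleftrightarrow>
     (\<forall>p. edge_path V E p \<and> length p - 1 \<ge> \<kappa> + 1 \<longrightarrow> pointwise_stab G \<phi> p = {\<one>\<^bsub>G\<^esub>})"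

definition torsion_free :: "('a, 'b) monoid_scheme \<Rightarrow> bool" where
  "torsion_free G \<longleftrightarrow> (\<forall>g\<in>carrier G. \<forall>n::nat. n > 0 \<and> g [^]\<^bsub>G\<^esub> n = \<one>\<^bsub>G\<^esub> \<longrightarrow> g = \<one>\<^bsub>G\<^esub>)"

end

theory Submission
  imports Defs "HOL-Algebra.Generated_Groups"
begin

text \<open>An element \<open>g \<noteq> 1\<close> fixing a long edge path would have, by pigeonhole on the finitely
  many cosets \<open>G' g\<^sup>i\<close>, a power \<open>g\<^sup>n\<close> with \<open>n > 0\<close> in \<open>G'\<close> that still fixes the path;
  acylindricity of \<open>G'\<close> forces \<open>g\<^sup>n = 1\<close>, contradicting torsion-freeness.\<close>

lemma (in group) finite_index_imp_pow_in_subgroup: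
  assumes H: "subgroup H G" and fin: "finite (rcosets H)" and g: "g \<in> carrier G"
  shows "\<exists>n>0. g [^] (n::nat) \<in> H"
proof -
  let ?coset = "\<lambda>i::nat. H #> g [^] i"
  have "range ?coset \<subseteq> rcosets H"
    using g subgroup.subset[OF H] by (auto intro: rcosetsI)
  then have "\<not> inj ?coset"
    using fin finite_subset finite_imageD infinite_UNIV_nat by blast
  then obtain i j where "i < j" and same_coset: "?coset i = ?coset j"
    unfolding inj_def by (metis linorder_neqE_nat)
  have "g [^] j \<in> H #> g [^] i"
    using same_coset g H by (simp add: rcos_self)
  then have "g [^] j \<otimes> inv (g [^] i) \<in> H"
    using subgroup.rcos_module_imp[OF H is_group] g by simp
  moreover have "g [^] j = g [^] (j - i) \<otimes> g [^] i"
    using \<open>i < j\<close> g by (simp add: nat_pow_mult)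
  then have "g [^] j \<otimes> inv (g [^] i) = g [^] (j - i)"
    using g by (simp add: m_assoc)
  ultimately show ?thesis
    using \<open>i < j\<close> by (metis zero_less_diff)
qed

lemma (in group) torsion_free_subgroup_trivial_inter_finite_index:
  assumes "torsion_free G" and H: "subgroup H G" "finite (rcosets H)"
    and K: "subgroup K G" and trivial_inter: "K \<inter> H = {\<one>}"
  shows "K = {\<one>}"
proof
  show "K \<subseteq> {\<one>}"
  proof
    fix g assume "g \<in> K"
    then have g: "g \<in> carrier G"
      by (rule subgroup.mem_carrier[OF K])
    obtain n :: nat where "n > 0" and "g [^] n \<in> H"
      using finite_index_imp_pow_in_subgroup[OF H g] by blast
    moreover have "g [^] n \<in> K"
      using subgroup_int_pow_closed[OF K \<open>g \<in> K\<close>, of "int n"] by (simp add: int_pow_int)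
    ultimately have "g [^] n = \<one>"
      using trivial_inter by (metis IntI singletonD)
    with \<open>torsion_free G\<close> g \<open>n > 0\<close> show "g \<in> {\<one>}"
      unfolding torsion_free_def by blast
  qed
  show "{\<one>} \<subseteq> K"
    by (simp add: subgroup.one_closed[OF K])
qed

lemma (in group_action) pointwise_stab_subgroup:
  assumes "set p \<subseteq> E"
  shows "subgroup (pointwise_stab G \<phi> p) G"
proof -
  interpret group G
    using group_hom group_hom.axioms(1) by blast
  have "pointwise_stab G \<phi> p = \<Inter> (insert (carrier G) (stabilizer G \<phi> ` set p))"
    by (auto simp: pointwise_stab_def stabilizer_def)
  also have "subgroup \<dots> G"
    using assms stabilizer_subgroup subgroup_self by (intro subgroups_Inter) auto
  finally show ?thesis .
qed

lemma pointwise_stab_carrier_update: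
  assumes "H \<subseteq> carrier G"
  shows "pointwise_stab (G\<lparr>carrier := H\<rparr>) \<phi> p = pointwise_stab G \<phi> p \<inter> H"
  using assms by (auto simp: pointwise_stab_def)

theorem lemma2p5:
  fixes G :: "('a, 'b) monoid_scheme" and H :: "'a set"
    and V :: "'v set" and E :: "'v \<Rightarrow> 'v \<Rightarrow> bool" and \<phi> :: "'a \<Rightarrow> 'v \<Rightarrow> 'v" and \<kappa> :: nat
  assumes "group G" and "torsion_free G"
    and "subgroup H G" and "finite (rcosets\<^bsub>G\<^esub> H)"
    and "tree_action G V E \<phi>"
    and "acylindrical \<kappa> (G\<lparr>carrier := H\<rparr>) V E \<phi>"
  shows "acylindrical \<kappa> G V E \<phi>"
  unfolding acylindrical_def
proof (intro allI impI)
  fix p assume p: "edge_path V E p \<and> length p - 1 \<ge> \<kappa> + 1"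
  interpret group G by (rule assms(1))
  interpret group_action G V \<phi>
    using assms(5) by (simp add: tree_action_def)
  have "set p \<subseteq> V"
    using p by (simp add: edge_path_def walk_def)
  then have "subgroup (pointwise_stab G \<phi> p) G"
    by (rule pointwise_stab_subgroup)
  moreover have "pointwise_stab G \<phi> p \<inter> H = {\<one>\<^bsub>G\<^esub>}"
    using assms(6) p subgroup.subset[OF assms(3)]
    by (simp add: acylindrical_def pointwise_stab_carrier_update)
  ultimately show "pointwise_stab G \<phi> p = {\<one>\<^bsub>G\<^esub>}"
    using torsion_free_subgroup_trivial_inter_finite_index assms(2-4) by blast
qed

end
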